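(* Let $\epsilon_1>0$ and let $\epsilon_5>0$ be a constant with $\left(\frac{\log e}{8}\right)\epsilon_5^4>14\epsilon_1$. Let $S\subseteq V$ be nonempty, let $v$ be uniform in $S$, and define $X_i,Y_i$ as in the context. If $\sum_{i=1}^n H(X_i\mid X_{<i},Y_{<i})\ge\left(1-\frac{6\epsilon_1}{\log n}\right)\log k$, then (for $n$ sufficiently large) all but at most $\epsilon_5 n$ of the variables $i\in[n]$ are typical.
   Context: Setting: variables $x_1,\dots,x_n$, constant-size alphabet $A$, $\rho=\sqrt n\log\log n$, $k=\binom n\rho$. $V$ is the set of pairs $v=(T,y)$ with $T\subseteq[n]$, $|T|=\rho$, $y:T\to A$. For $v=(T,y)$ uniform in $S\subseteq V$: $X_i$ is the indicator of $i\in T$, $Y_i=y(i)$ if $X_i=1$ and $Y_i=\bot$ otherwise. A prefix of length $i-1$ is a value $w_{i-1}$ of $(X_{<i},Y_{<i})$. A prefix $w_{i-1}$ is typical if $(1-\epsilon_5)\rho/n<\Pr[X_i=1\mid (X_{<i},Y_{<i})=w_{i-1}]<(1+\epsilon_5)\rho/n$. A variable $i$ is typical if $\sum_{\text{typical } w_{i-1}}\Pr[(X_{<i},Y_{<i})=w_{i-1}]\ge1-\epsilon_5$. $H$ denotes Shannon entropy, logs base 2. *)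

theory Defs
  imports Complex_Main "HOL-Library.FuncSet"
begin

definition rho :: "nat \<Rightarrow> nat" where
  "rho n = nat \<lfloor>sqrt (real n) * log 2 (log 2 (real n))\<rfloor>"

definition kk :: "nat \<Rightarrow> nat" where
  "kk n = n choose rho n"

definition VV :: "nat \<Rightarrow> 'a set \<Rightarrow> (nat set \<times> (nat \<Rightarrow> 'a)) set" where
  "VV n A = {(T, y). T \<subseteq> {1..n} \<and> card T = rho n \<and> y \<in> T \<rightarrow>\<^sub>E A}"

definition prob_unif :: "'v set \<Rightarrow> ('v \<Rightarrow> bool) \<Rightarrow> real" where
  "prob_unif S P = real (card {v \<in> S. P v}) / real (card S)"

definition Xv :: "nat \<Rightarrow> nat set \<times> (nat \<Rightarrow> 'a) \<Rightarrow> bool" where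
  "Xv i v = (i \<in> fst v)"

(* Y_i = y(i) if i \<in> T, and \<bottom> (None) otherwise *)
definition Yv :: "nat \<Rightarrow> nat set \<times> (nat \<Rightarrow> 'a) \<Rightarrow> 'a option" where
  "Yv i v = (if i \<in> fst v then Some (snd v i) else None)"

definition prefix :: "nat \<Rightarrow> nat set \<times> (nat \<Rightarrow> 'a) \<Rightarrow> (bool \<times> 'a option) list" where
  "prefix i v = map (\<lambda>j. (Xv j v, Yv j v)) [1..<i]"

definition cond_entropy :: "'v set \<Rightarrow> ('v \<Rightarrow> 'x) \<Rightarrow> ('v \<Rightarrow> 'w) \<Rightarrow> real" where
  "cond_entropy S X W =
     (\<Sum>p \<in> (\<lambda>v. (X v, W v)) ` S.
        prob_unif S (\<lambda>v. (X v, W v) = p) *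
        log 2 (prob_unif S (\<lambda>v. W v = snd p) / prob_unif S (\<lambda>v. (X v, W v) = p)))"

definition cond_prob_X :: "(nat set \<times> (nat \<Rightarrow> 'a)) set \<Rightarrow> nat \<Rightarrow> (bool \<times> 'a option) list \<Rightarrow> real" where
  "cond_prob_X S i w = prob_unif S (\<lambda>v. Xv i v \<and> prefix i v = w) / prob_unif S (\<lambda>v. prefix i v = w)"

definition typical_prefix :: "real \<Rightarrow> nat \<Rightarrow> (nat set \<times> (nat \<Rightarrow> 'a)) set \<Rightarrow> nat \<Rightarrow> (bool \<times> 'a option) list \<Rightarrow> bool" where
  "typical_prefix eps n S i w \<longleftrightarrow>
     (1 - eps) * real (rho n) / real n < cond_prob_X S i w \<and>
     cond_prob_X S i w < (1 + eps) * real (rho n) / real n"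

definition typical_var :: "real \<Rightarrow> nat \<Rightarrow> (nat set \<times> (nat \<Rightarrow> 'a)) set \<Rightarrow> nat \<Rightarrow> bool" where
  "typical_var eps n S i \<longleftrightarrow>
     (\<Sum>w \<in> {w \<in> prefix i ` S. typical_prefix eps n S i w}. prob_unif S (\<lambda>v. prefix i v = w)) \<ge> 1 - eps"

end

theory Submission
  imports Defs "HOL-Real_Asymp.Real_Asymp"
begin

text \<open>
  Write \<open>N = |S|\<close> and \<open>q = \<rho>/n\<close>. For each variable \<open>i\<close>, \<open>N\<cdot>H(X\<^sub>i | X\<^sub><\<^sub>i, Y\<^sub><\<^sub>i)\<close>
  is at most the cross entropy of \<open>X\<^sub>i\<close> against a Bernoulli(\<open>q\<close>) variable minus
  \<open>1/ln 2\<close> times the gap \<open>\<Sum>\<^sub>w (\<surd>(N Pr[X\<^sub>i = 1, w]) - \<surd>(q N Pr[w]))\<^sup>2\<close>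
  (from \<open>a ln(c/a) \<le> 2\<surd>(ac) - 2a\<close>), and this gap is at least \<open>N q \<epsilon>\<^sup>3/9\<close> when \<open>i\<close> is atypical.
  Since \<open>\<Sum>\<^sub>i Pr[X\<^sub>i = 1] = \<rho>\<close>, the cross entropies add up to
  \<open>\<rho> log(1/q) + (n-\<rho>) log(1/(1-q)) \<le> log k + log(n+1)\<close>, because the mode of the
  binomial distribution carries mass at least \<open>1/(n+1)\<close>. So more than \<open>\<epsilon> n\<close> atypical
  variables would push the entropy sum below \<open>log k + log(n+1) - \<rho> \<epsilon>\<^sup>4/(9 ln 2)\<close>, while
  the hypothesis and \<open>log k \<le> \<rho> log n\<close> keep it above \<open>log k - 6\<epsilon>\<^sub>1\<rho>\<close>; this is impossible
  since \<open>log(n+1) = o(\<rho>)\<close>.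
\<close>

lemma two_mult_one_minus_inverse_sqrt_le_ln:
  fixes u :: real
  assumes "0 < u"
  shows "2 * (1 - 1 / sqrt u) \<le> ln u"
proof -
  have "ln (1 / sqrt u) \<le> 1 / sqrt u - 1"
    using assms by (intro ln_le_minus_one) simp
  moreover have "ln u = - 2 * ln (1 / sqrt u)"
    using assms by (simp add: ln_div ln_sqrt)
  ultimately show ?thesis by (simp add: algebra_simps)
qed

lemma mult_ln_divide_le:
  fixes a c :: real
  assumes "0 \<le> a" "0 < c"
  shows "a * ln (c / a) \<le> 2 * sqrt (a * c) - 2 * a"
proof (cases "a = 0")
  case False
  with assms have a: "a > 0" by simp
  have "ln (c / a) = - ln (a / c)"
    using a assms by (simp add: ln_div)
  also have "\<dots> \<le> 2 * sqrt (c / a) - 2"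
    using two_mult_one_minus_inverse_sqrt_le_ln[of "a / c"] a assms by (simp add: real_sqrt_divide)
  finally have "a * ln (c / a) \<le> a * (2 * sqrt (c / a) - 2)"
    using a by (intro mult_left_mono) auto
  also have "a * sqrt (c / a) = sqrt (a * c)"
    using a by (simp add: real_sqrt_divide real_sqrt_mult field_simps)
  ultimately show ?thesis by (simp add: algebra_simps)
qed simp

lemma mult_ln_ratio_split:
  fixes a b p :: real
  assumes "0 \<le> a" "0 < b" "0 < p"
  shows "a * ln (b / a) = a * ln (1 / p) + a * ln (b * p / a)"
proof (cases "a = 0")
  case False
  with assms show ?thesis by (simp add: ln_div ln_mult algebra_simps)
qed simp

lemma two_point_entropy_le_ln:
  fixes a1 a0 q :: real
  assumes "0 \<le> a1" "0 \<le> a0" "0 < a1 + a0" "0 < q" "q < 1"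
  shows "a1 * ln ((a1 + a0) / a1) + a0 * ln ((a1 + a0) / a0)
         \<le> a1 * ln (1 / q) + a0 * ln (1 / (1 - q)) - (sqrt a1 - sqrt ((a1 + a0) * q))\<^sup>2"
proof -
  define b where "b = a1 + a0"
  have b: "b > 0" using assms by (simp add: b_def)
  have "a1 * ln (b * q / a1) \<le> 2 * sqrt (a1 * (b * q)) - 2 * a1"
    using assms b by (intro mult_ln_divide_le) auto
  moreover have "a0 * ln (b * (1 - q) / a0) \<le> 2 * sqrt (a0 * (b * (1 - q))) - 2 * a0"
    using assms b by (intro mult_ln_divide_le) auto
  moreover have "(sqrt a1 - sqrt (b * q))\<^sup>2 = a1 + b * q - 2 * sqrt (a1 * (b * q))"
    using assms b by (simp add: power2_diff real_sqrt_mult power_mult_distrib)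
  moreover have "(sqrt a0 - sqrt (b * (1 - q)))\<^sup>2 = a0 + b * (1 - q) - 2 * sqrt (a0 * (b * (1 - q)))"
    using assms b by (simp add: power2_diff real_sqrt_mult power_mult_distrib)
  moreover have "0 \<le> (sqrt a0 - sqrt (b * (1 - q)))\<^sup>2" by simp
  moreover have "b * (1 - q) = b - b * q" by (simp add: algebra_simps)
  ultimately show ?thesis
    using mult_ln_ratio_split[of a1 b q] mult_ln_ratio_split[of a0 b "1 - q"] assms b
    by (simp add: b_def)
qed

lemma two_point_entropy_le_log:
  fixes a1 a0 q :: real
  assumes "0 \<le> a1" "0 \<le> a0" "0 < a1 + a0" "0 < q" "q < 1"
  shows "a1 * log 2 ((a1 + a0) / a1) + a0 * log 2 ((a1 + a0) / a0)
         \<le> a1 * log 2 (1 / q) + a0 * log 2 (1 / (1 - q)) - (sqrt a1 - sqrt ((a1 + a0) * q))\<^sup>2 / ln 2"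
  using divide_right_mono[OF two_point_entropy_le_ln[OF assms], of "ln 2"]
  by (simp add: log_def add_divide_distrib diff_divide_distrib)

lemma sqrt_diff_squared_ge_if_far:
  fixes p q e :: real
  assumes "0 \<le> p" "0 < q" "0 < e" "e < 1" "p \<le> (1 - e) * q \<or> (1 + e) * q \<le> p"
  shows "q * e\<^sup>2 / 9 \<le> (sqrt p - sqrt q)\<^sup>2"
  using assms(5)
proof
  assume "p \<le> (1 - e) * q"
  then have "sqrt p \<le> sqrt (1 - e) * sqrt q"
    by (simp add: real_sqrt_mult[symmetric])
  moreover have "sqrt (1 - e) \<le> 1 - e / 2"
    using assms by (intro real_le_lsqrt) (auto simp: power2_eq_square algebra_simps)
  ultimately have "e / 2 * sqrt q \<le> sqrt q - sqrt p"
    using assms(2) mult_right_mono[of "sqrt (1 - e)" "1 - e / 2" "sqrt q"] by (simp add: algebra_simps)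
  then have "(e / 2 * sqrt q)\<^sup>2 \<le> (sqrt q - sqrt p)\<^sup>2"
    using assms by (intro power_mono) auto
  moreover have "q * e\<^sup>2 / 9 \<le> (e / 2 * sqrt q)\<^sup>2"
    using assms by (simp add: power_mult_distrib power_divide)
  ultimately show ?thesis by (simp add: power2_commute)
next
  assume "(1 + e) * q \<le> p"
  then have "sqrt (1 + e) * sqrt q \<le> sqrt p"
    by (simp add: real_sqrt_mult[symmetric])
  moreover have "1 + e / 3 \<le> sqrt (1 + e)"
  proof (rule real_le_rsqrt)
    have "e * e \<le> e" using assms by (simp add: mult_le_cancel_left1)
    then show "(1 + e / 3)\<^sup>2 \<le> 1 + e"
      using assms by (simp add: power2_eq_square field_simps)
  qed
  ultimately have "e / 3 * sqrt q \<le> sqrt p - sqrt q"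
    using assms(2) mult_right_mono[of "1 + e / 3" "sqrt (1 + e)" "sqrt q"] by (simp add: algebra_simps)
  then have "(e / 3 * sqrt q)\<^sup>2 \<le> (sqrt p - sqrt q)\<^sup>2"
    using assms by (simp add: power_mono)
  then show ?thesis
    using assms by (simp add: power_mult_distrib power_divide mult.commute)
qed

section \<open>The mode of the binomial distribution\<close>

definition binomial_weight :: "nat \<Rightarrow> real \<Rightarrow> nat \<Rightarrow> real" where
  "binomial_weight n q j = real (n choose j) * q ^ j * (1 - q) ^ (n - j)"

lemma sum_binomial_weight: "(\<Sum>j\<le>n. binomial_weight n q j) = 1"
  using binomial_ring[of q "1 - q" n] by (simp add: binomial_weight_def)

lemma binomial_weight_Suc:
  assumes "j < n"
  shows "binomial_weight n q (Suc j) * (real (Suc j) * (1 - q))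
           = binomial_weight n q j * (real (n - j) * q)"
proof -
  have c: "real (n choose Suc j) * real (Suc j) = real (n choose j) * real (n - j)"
    using binomial_absorption[of j n] binomial_absorb_comp[of n j]
    by (metis of_nat_mult mult.commute)
  have e: "n - j = Suc (n - Suc j)" using assms by simp
  have "binomial_weight n q (Suc j) * (real (Suc j) * (1 - q))
        = (real (n choose Suc j) * real (Suc j)) * (q ^ j * q) * ((1 - q) ^ (n - Suc j) * (1 - q))"
    unfolding binomial_weight_def by (simp add: ac_simps)
  also have "\<dots> = binomial_weight n q j * (real (n - j) * q)"
    unfolding c binomial_weight_def e by (simp add: ac_simps)
  finally show ?thesis .
qed

lemma binomial_weight_le_mode:
  assumes "0 < k" "k < n" "j \<le> n"
  shows "binomial_weight n (real k / real n) j \<le> binomial_weight n (real k / real n) k"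
proof -
  define q where "q = real k / real n"
  define t where "t = binomial_weight n q"
  have q: "0 < q" "q < 1" using assms by (auto simp: q_def)
  have t_nonneg: "0 \<le> t j" for j using q by (simp add: t_def binomial_weight_def)
  have scaled: "real n * (real (Suc j) * (1 - q)) = real (Suc j * (n - k))"
    "real n * (real (n - j) * q) = real (k * (n - j))" for j
    using assms unfolding of_nat_mult of_nat_diff[OF less_imp_le[OF assms(2)]]
    by (simp_all add: q_def field_simps)
  have up: "t j \<le> t (Suc j)" if "j < k" for j
  proof -
    have "real n * (real (Suc j) * (1 - q)) \<le> real n * (real (n - j) * q)"
      unfolding scaled using that by (intro of_nat_mono mult_le_mono) auto
    then have "t j * (real (Suc j) * (1 - q)) \<le> t (Suc j) * (real (Suc j) * (1 - q))"
      using binomial_weight_Suc[of j n q] that assms t_nonneg[of j]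
      by (simp add: t_def mult_left_mono)
    then show ?thesis using q by (simp add: mult_le_cancel_right)
  qed
  have down: "t (Suc j) \<le> t j" if "k \<le> j" "j < n" for j
  proof -
    have "real n * (real (n - j) * q) \<le> real n * (real (Suc j) * (1 - q))"
      unfolding scaled using that by (intro of_nat_mono mult_le_mono) auto
    then have "t (Suc j) * (real (Suc j) * (1 - q)) \<le> t j * (real (Suc j) * (1 - q))"
      using binomial_weight_Suc[of j n q] that assms t_nonneg[of j]
      by (simp add: t_def mult_left_mono)
    then show ?thesis using q by (simp add: mult_le_cancel_right)
  qed
  show ?thesis
  proof (cases "j \<le> k")
    case True
    then show ?thesis unfolding q_def[symmetric] t_def[symmetric]
      by (induction k rule: dec_induct) (auto intro: order.trans up)
  next
    case False
    then have "k \<le> j" by simp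
    then show ?thesis unfolding q_def[symmetric] t_def[symmetric] using assms(3)
      by (induction j rule: dec_induct) (auto intro: order.trans[OF down])
  qed
qed

lemma one_le_Suc_mult_binomial_weight_mode:
  assumes "0 < k" "k < n"
  shows "1 \<le> real (Suc n) * binomial_weight n (real k / real n) k"
proof -
  have "1 = (\<Sum>j\<le>n. binomial_weight n (real k / real n) j)"
    by (rule sum_binomial_weight[symmetric])
  also have "\<dots> \<le> (\<Sum>j\<le>n. binomial_weight n (real k / real n) k)"
    using assms by (intro sum_mono binomial_weight_le_mode) auto
  finally show ?thesis by simp
qed

lemma cross_entropy_le_log_binomial:
  assumes "0 < k" "k < n" "q = real k / real n"
  shows "real k * log 2 (1 / q) + real (n - k) * log 2 (1 / (1 - q))
           \<le> log 2 (real (n choose k)) + log 2 (real n + 1)"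
proof -
  have q: "0 < q" "q < 1" using assms by auto
  have binom_pos: "0 < real (n choose k)" using assms(2) by simp
  have "0 \<le> log 2 (real (Suc n) * binomial_weight n q k)"
    using one_le_Suc_mult_binomial_weight_mode[OF assms(1,2)] assms(3) by simp
  also have "\<dots> = log 2 (real n + 1) + log 2 (real (n choose k)) + real k * log 2 q + real (n - k) * log 2 (1 - q)"
    using q binom_pos by (simp add: binomial_weight_def log_mult log_nat_power add.commute)
  finally show ?thesis
    using q by (simp add: log_divide)
qed

section \<open>Conditional entropy of a Boolean variable\<close>

lemma card_Collect_eq_sum_fibres:
  assumes "finite S"
  shows "(\<Sum>w\<in>W ` S. card {v\<in>S. P v \<and> W v = w}) = card {v\<in>S. P v}"
proof -
  have "card {v\<in>S. P v} = (\<Sum>v\<in>S. if P v then 1 else 0)"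
    using assms by (simp add: sum.inter_filter[symmetric])
  also have "\<dots> = (\<Sum>w\<in>W ` S. \<Sum>v\<in>{v\<in>S. W v = w}. if P v then 1 else 0)"
    using assms by (rule sum.image_gen)
  also have "\<dots> = (\<Sum>w\<in>W ` S. card {v\<in>S. P v \<and> W v = w})"
    using assms by (intro sum.cong refl) (auto simp: sum.If_cases Int_def intro!: arg_cong[where f = card])
  finally show ?thesis ..
qed

lemma card_mult_cond_entropy:
  fixes X :: "'v \<Rightarrow> 'x::finite" and W :: "'v \<Rightarrow> 'w"
  assumes "finite S"
  shows "real (card S) * cond_entropy S X W =
    (\<Sum>w\<in>W ` S. \<Sum>x\<in>UNIV. real (card {v\<in>S. X v = x \<and> W v = w}) *
       log 2 (real (card {v\<in>S. W v = w}) / real (card {v\<in>S. X v = x \<and> W v = w})))"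
proof (cases "S = {}")
  case False
  define N where "N = real (card S)"
  have N: "N > 0" using assms False by (simp add: N_def card_gt_0_iff)
  define c where "c p = real (card {v\<in>S. (X v, W v) = p})" for p
  define cW where "cW w = real (card {v\<in>S. W v = w})" for w
  define contrib where "contrib p = c p * log 2 (cW (snd p) / c p)" for p
  have "N * cond_entropy S X W = (\<Sum>p\<in>(\<lambda>v. (X v, W v)) ` S. N * (c p / N * log 2 ((cW (snd p) / N) / (c p / N))))"
    unfolding cond_entropy_def prob_unif_def N_def[symmetric] c_def cW_def
    by (simp add: sum_distrib_left)
  also have "\<dots> = (\<Sum>p\<in>(\<lambda>v. (X v, W v)) ` S. contrib p)"
    using N by (intro sum.cong refl) (simp add: contrib_def)
  also have "\<dots> = (\<Sum>p\<in>UNIV \<times> W ` S. contrib p)"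
    \<comment> \<open>a pair outside the image has count \<open>0\<close>, so it contributes \<open>0 * log 2 (_ / 0) = 0\<close>\<close>
    using assms by (intro sum.mono_neutral_left) (auto simp: contrib_def c_def)
  also have "\<dots> = (\<Sum>w\<in>W ` S. \<Sum>x\<in>UNIV. contrib (x, w))"
    by (subst sum.swap) (simp add: sum.cartesian_product)
  finally show ?thesis
    unfolding N_def contrib_def c_def cW_def by simp
qed simp

definition hellinger_gap :: "'v set \<Rightarrow> ('v \<Rightarrow> bool) \<Rightarrow> ('v \<Rightarrow> 'w) \<Rightarrow> real \<Rightarrow> real" where
  "hellinger_gap S X W q =
     (\<Sum>w\<in>W ` S. (sqrt (real (card {v\<in>S. X v \<and> W v = w})) - sqrt (real (card {v\<in>S. W v = w}) * q))\<^sup>2)"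

lemma hellinger_gap_nonneg: "0 \<le> hellinger_gap S X W q"
  unfolding hellinger_gap_def by (intro sum_nonneg) simp

lemma card_mult_cond_entropy_le:
  fixes X :: "'v \<Rightarrow> bool" and W :: "'v \<Rightarrow> 'w"
  assumes "finite S" "0 < q" "q < 1"
  shows "real (card S) * cond_entropy S X W
           \<le> real (card {v\<in>S. X v}) * log 2 (1 / q) + real (card {v\<in>S. \<not> X v}) * log 2 (1 / (1 - q))
              - hellinger_gap S X W q / ln 2"
proof -
  define cT where "cT w = real (card {v\<in>S. X v \<and> W v = w})" for w
  define cF where "cF w = real (card {v\<in>S. \<not> X v \<and> W v = w})" for w
  have cW: "real (card {v\<in>S. W v = w}) = cT w + cF w" for w
  proof -
    have "{v\<in>S. W v = w} = {v\<in>S. X v \<and> W v = w} \<union> {v\<in>S. \<not> X v \<and> W v = w}" by auto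
    then show ?thesis
      using assms(1) by (simp add: cT_def cF_def card_Un_disjoint disjoint_iff)
  qed
  have cW_pos: "0 < cT w + cF w" if "w \<in> W ` S" for w
    using that assms(1) unfolding cW[symmetric] by (auto simp: card_gt_0_iff)
  have "real (card S) * cond_entropy S X W
          = (\<Sum>w\<in>W ` S. cT w * log 2 ((cT w + cF w) / cT w) + cF w * log 2 ((cT w + cF w) / cF w))"
    unfolding card_mult_cond_entropy[OF assms(1)] UNIV_bool cW by (simp add: cT_def cF_def add.commute)
  also have "\<dots> \<le> (\<Sum>w\<in>W ` S. cT w * log 2 (1 / q) + cF w * log 2 (1 / (1 - q))
                     - (sqrt (cT w) - sqrt ((cT w + cF w) * q))\<^sup>2 / ln 2)"
    using assms cW_pos by (intro sum_mono two_point_entropy_le_log) (auto simp: cT_def cF_def)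
  also have "\<dots> = (\<Sum>w\<in>W ` S. cT w) * log 2 (1 / q) + (\<Sum>w\<in>W ` S. cF w) * log 2 (1 / (1 - q))
                   - hellinger_gap S X W q / ln 2"
    unfolding hellinger_gap_def cW cT_def[symmetric]
    by (simp add: sum.distrib sum_subtractf sum_distrib_right sum_divide_distrib)
  also have "(\<Sum>w\<in>W ` S. cT w) = real (card {v\<in>S. X v})"
    unfolding cT_def of_nat_sum[symmetric] card_Collect_eq_sum_fibres[OF assms(1)] ..
  also have "(\<Sum>w\<in>W ` S. cF w) = real (card {v\<in>S. \<not> X v})"
    unfolding cF_def of_nat_sum[symmetric] card_Collect_eq_sum_fibres[OF assms(1)] ..
  finally show ?thesis .
qed

lemma hellinger_gap_ge_if_far:
  fixes X :: "'v \<Rightarrow> bool" and W :: "'v \<Rightarrow> 'w"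
  assumes "finite S" "0 < q" "0 < e" "e < 1" "B \<subseteq> W ` S"
    and far: "\<And>w. w \<in> B \<Longrightarrow>
      real (card {v\<in>S. X v \<and> W v = w}) / real (card {v\<in>S. W v = w}) \<le> (1 - e) * q \<or>
      (1 + e) * q \<le> real (card {v\<in>S. X v \<and> W v = w}) / real (card {v\<in>S. W v = w})"
    and mass: "e * real (card S) \<le> (\<Sum>w\<in>B. real (card {v\<in>S. W v = w}))"
  shows "real (card S) * q * e ^ 3 / 9 \<le> hellinger_gap S X W q"
proof -
  define cT where "cT w = real (card {v\<in>S. X v \<and> W v = w})" for w
  define cW where "cW w = real (card {v\<in>S. W v = w})" for w
  define gap where "gap w = (sqrt (cT w) - sqrt (cW w * q))\<^sup>2" for w
  have gap_ge: "cW w * (q * e\<^sup>2 / 9) \<le> gap w" if "w \<in> B" for w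
  proof -
    have cW_pos: "0 < cW w"
      using that assms(1,5) by (auto simp: cW_def card_gt_0_iff)
    define p where "p = cT w / cW w"
    have "cT w = cW w * p" using cW_pos by (simp add: p_def)
    then have "gap w = (sqrt (cW w) * (sqrt p - sqrt q))\<^sup>2"
      by (simp add: gap_def real_sqrt_mult algebra_simps)
    then have "gap w = cW w * (sqrt p - sqrt q)\<^sup>2"
      using cW_pos by (simp add: power_mult_distrib)
    moreover have "q * e\<^sup>2 / 9 \<le> (sqrt p - sqrt q)\<^sup>2"
      using far[OF that] assms(2-4) cW_pos
      by (intro sqrt_diff_squared_ge_if_far) (auto simp: p_def cT_def cW_def)
    ultimately show ?thesis using cW_pos by simp
  qed
  have "real (card S) * q * e ^ 3 / 9 = e * real (card S) * (q * e\<^sup>2 / 9)"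
    by (simp add: power2_eq_square power3_eq_cube)
  also have "\<dots> \<le> (\<Sum>w\<in>B. cW w) * (q * e\<^sup>2 / 9)"
    using mass assms(2) by (intro mult_right_mono) (auto simp: cW_def)
  also have "\<dots> \<le> (\<Sum>w\<in>B. gap w)"
    unfolding sum_distrib_right using gap_ge by (rule sum_mono)
  also have "\<dots> \<le> hellinger_gap S X W q"
    unfolding hellinger_gap_def gap_def cT_def cW_def
    using assms(1,5) by (intro sum_mono2) auto
  finally show ?thesis .
qed

section \<open>Typical variables of a uniform random element of \<open>V\<close>\<close>

lemma hellinger_gap_ge_if_not_typical_var:
  fixes S :: "(nat set \<times> (nat \<Rightarrow> 'a)) set"
  assumes "finite S" "S \<noteq> {}" "0 < e" "e < 1" "0 < rho n" "rho n < n"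
    and "\<not> typical_var e n S i"
  shows "real (card S) * (real (rho n) / real n) * e ^ 3 / 9
           \<le> hellinger_gap S (Xv i) (prefix i) (real (rho n) / real n)"
proof -
  define N where "N = real (card S)"
  define cW where "cW w = real (card {v\<in>S. prefix i v = w})" for w
  define Ty where "Ty = {w\<in>prefix i ` S. typical_prefix e n S i w}"
  define B where "B = {w\<in>prefix i ` S. \<not> typical_prefix e n S i w}"
  have N: "0 < N" using assms(1,2) by (simp add: N_def card_gt_0_iff)
  have "(\<Sum>w\<in>Ty. cW w / N) < 1 - e"
    using assms(7) by (simp add: typical_var_def prob_unif_def Ty_def cW_def N_def)
  then have "(\<Sum>w\<in>Ty. cW w) < (1 - e) * N"
    using N by (simp add: sum_divide_distrib[symmetric] divide_less_eq)
  moreover have "(\<Sum>w\<in>Ty. cW w) + (\<Sum>w\<in>B. cW w) = N"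
  proof -
    have "(\<Sum>w\<in>Ty. cW w) + (\<Sum>w\<in>B. cW w) = (\<Sum>w\<in>prefix i ` S. cW w)"
      using assms(1) unfolding Ty_def B_def by (subst sum.union_disjoint[symmetric]) (auto intro: sum.cong)
    also have "\<dots> = N"
      using card_Collect_eq_sum_fibres[OF assms(1), where W = "prefix i" and P = "\<lambda>_. True"]
      unfolding cW_def N_def of_nat_sum[symmetric] by simp
    finally show ?thesis .
  qed
  ultimately have mass: "e * N \<le> (\<Sum>w\<in>B. cW w)"
    by (simp add: algebra_simps)
  show ?thesis
  proof (rule hellinger_gap_ge_if_far[where B = B])
    fix w assume "w \<in> B"
    then show "real (card {v\<in>S. Xv i v \<and> prefix i v = w}) / real (card {v\<in>S. prefix i v = w})
                 \<le> (1 - e) * (real (rho n) / real n) \<or>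
               (1 + e) * (real (rho n) / real n)
                 \<le> real (card {v\<in>S. Xv i v \<and> prefix i v = w}) / real (card {v\<in>S. prefix i v = w})"
      using N by (auto simp: B_def typical_prefix_def cond_prob_X_def prob_unif_def N_def)
  qed (use assms mass in \<open>auto simp: B_def N_def cW_def\<close>)
qed

lemma finite_VV:
  assumes "finite A"
  shows "finite (VV n A)"
proof (rule finite_subset)
  show "VV n A \<subseteq> Sigma (Pow {1..n}) (\<lambda>T. T \<rightarrow>\<^sub>E A)"
    by (auto simp: VV_def)
  show "finite (Sigma (Pow {1..n}) (\<lambda>T. T \<rightarrow>\<^sub>E A))"
    using assms by (intro finite_SigmaI finite_PiE) (auto intro: finite_subset)
qed

lemma sum_card_Xv:
  assumes "finite S" "S \<subseteq> VV n A"
  shows "(\<Sum>i=1..n. card {v\<in>S. Xv i v}) = card S * rho n"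
proof -
  have "(\<Sum>i=1..n. card {v\<in>S. Xv i v}) = (\<Sum>i=1..n. \<Sum>v\<in>S. of_bool (i \<in> fst v))"
    using assms(1) by (simp add: Xv_def Int_def)
  also have "\<dots> = (\<Sum>v\<in>S. \<Sum>i=1..n. of_bool (i \<in> fst v))"
    by (rule sum.swap)
  also have "\<dots> = (\<Sum>v\<in>S. rho n)"
  proof (rule sum.cong[OF refl])
    fix v assume "v \<in> S"
    then have "fst v \<subseteq> {1..n}" "card (fst v) = rho n"
      using assms(2) by (force simp: VV_def)+
    then show "(\<Sum>i=1..n. of_bool (i \<in> fst v)) = rho n"
      by (simp add: Int_absorb1 Int_absorb2)
  qed
  finally show ?thesis by simp
qed

lemma card_mult_sum_cond_entropy_le:
  fixes S :: "(nat set \<times> (nat \<Rightarrow> 'a)) set"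
  assumes "finite S" "S \<subseteq> VV n A" "0 < q" "q < 1"
  shows "real (card S) * (\<Sum>i=1..n. cond_entropy S (Xv i) (prefix i))
           \<le> real (card S) * (real (rho n) * log 2 (1 / q) + (real n - real (rho n)) * log 2 (1 / (1 - q)))
              - (\<Sum>i=1..n. hellinger_gap S (Xv i) (prefix i) q) / ln 2"
proof -
  define N where "N = real (card S)"
  define cX where "cX i = real (card {v\<in>S. Xv i v})" for i
  have card_not: "real (card {v\<in>S. \<not> Xv i v}) = N - cX i" for i
  proof -
    have "card {v\<in>S. Xv i v} + card {v\<in>S. \<not> Xv i v} = card S"
      using assms(1) by (subst card_Un_disjoint[symmetric]) (auto intro: arg_cong[where f = card])
    then show ?thesis by (simp add: N_def cX_def algebra_simps flip: of_nat_add)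
  qed
  have sum_cX: "(\<Sum>i=1..n. cX i) = N * real (rho n)"
    using sum_card_Xv[OF assms(1,2)] unfolding cX_def N_def of_nat_sum[symmetric] by simp
  have per_var: "N * cond_entropy S (Xv i) (prefix i)
      \<le> cX i * log 2 (1 / q) + (N - cX i) * log 2 (1 / (1 - q)) - hellinger_gap S (Xv i) (prefix i) q / ln 2"
    for i
    using card_mult_cond_entropy_le[OF assms(1,3,4), of "Xv i" "prefix i"]
    unfolding card_not N_def cX_def .
  have "N * (\<Sum>i=1..n. cond_entropy S (Xv i) (prefix i))
        \<le> (\<Sum>i=1..n. cX i * log 2 (1 / q) + (N - cX i) * log 2 (1 / (1 - q))
                        - hellinger_gap S (Xv i) (prefix i) q / ln 2)"
    unfolding sum_distrib_left by (intro sum_mono per_var)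
  also have "\<dots> = (\<Sum>i=1..n. cX i) * log 2 (1 / q) + (\<Sum>i=1..n. N - cX i) * log 2 (1 / (1 - q))
                  - (\<Sum>i=1..n. hellinger_gap S (Xv i) (prefix i) q) / ln 2"
    by (simp add: sum.distrib sum_subtractf sum_distrib_right sum_divide_distrib left_diff_distrib)
  also have "(\<Sum>i=1..n. N - cX i) = N * (real n - real (rho n))"
    unfolding sum_subtractf sum_cX by (simp add: algebra_simps)
  finally show ?thesis
    unfolding sum_cX N_def by (simp add: algebra_simps)
qed

lemma sum_cond_entropy_le:
  fixes S :: "(nat set \<times> (nat \<Rightarrow> 'a)) set"
  assumes "finite S" "S \<noteq> {}" "S \<subseteq> VV n A" "0 < rho n" "rho n < n" "0 < e" "e < 1"
  shows "(\<Sum>i=1..n. cond_entropy S (Xv i) (prefix i))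
           \<le> log 2 (real (kk n)) + log 2 (real n + 1)
              - real (card {i\<in>{1..n}. \<not> typical_var e n S i}) * (real (rho n) / real n) * e ^ 3 / (9 * ln 2)"
proof -
  define q where "q = real (rho n) / real n"
  define N where "N = real (card S)"
  define B where "B = {i\<in>{1..n}. \<not> typical_var e n S i}"
  define G where "G = (\<Sum>i=1..n. hellinger_gap S (Xv i) (prefix i) q)"
  have q: "0 < q" "q < 1" using assms(4,5) by (auto simp: q_def)
  have N: "0 < N" using assms(1,2) by (simp add: N_def card_gt_0_iff)
  have "real (card B) * (N * q * e ^ 3 / 9) = (\<Sum>i\<in>B. N * q * e ^ 3 / 9)"
    by simp
  also have "\<dots> \<le> (\<Sum>i\<in>B. hellinger_gap S (Xv i) (prefix i) q)"
    using hellinger_gap_ge_if_not_typical_var[OF assms(1,2,6,7,4,5)]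
    by (intro sum_mono) (simp add: B_def N_def q_def)
  also have "\<dots> \<le> G"
    unfolding G_def B_def by (intro sum_mono2 hellinger_gap_nonneg) auto
  finally have gap: "real (card B) * (N * q * e ^ 3 / 9) \<le> G" .
  have "real (rho n) * log 2 (1 / q) + (real n - real (rho n)) * log 2 (1 / (1 - q))
          \<le> log 2 (real (kk n)) + log 2 (real n + 1)"
    using cross_entropy_le_log_binomial[OF assms(4,5) q_def] assms(5)
    by (simp add: kk_def of_nat_diff)
  then have "N * (real (rho n) * log 2 (1 / q) + (real n - real (rho n)) * log 2 (1 / (1 - q)))
               \<le> N * (log 2 (real (kk n)) + log 2 (real n + 1))"
    using N by (intro mult_left_mono) auto
  then have "N * (\<Sum>i=1..n. cond_entropy S (Xv i) (prefix i))
               \<le> N * (log 2 (real (kk n)) + log 2 (real n + 1)) - G / ln 2"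
    using card_mult_sum_cond_entropy_le[OF assms(1,3) q]
    unfolding N_def[symmetric] G_def[symmetric] by linarith
  also have "\<dots> \<le> N * (log 2 (real (kk n)) + log 2 (real n + 1)
                       - real (card B) * q * e ^ 3 / (9 * ln 2))"
    using divide_right_mono[OF gap, of "ln 2"] by (simp add: algebra_simps)
  finally show ?thesis
    using N unfolding B_def q_def by (simp add: mult_le_cancel_left_pos)
qed

lemma eventually_rho_bounds:
  fixes d :: real
  assumes "0 < d"
  shows "eventually (\<lambda>n. 0 < rho n \<and> rho n < n \<and> 0 < log 2 (real n) \<and>
                         log 2 (real n + 1) < d * real (rho n)) sequentially"
proof -
  define f where "f n = sqrt (real n) * log 2 (log 2 (real n))" for n :: nat
  have "((\<lambda>n. log 2 (real n + 1) / (f n - 1)) \<longlongrightarrow> 0) sequentially"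
    unfolding f_def by real_asymp
  then have "eventually (\<lambda>n. log 2 (real n + 1) / (f n - 1) < d) sequentially"
    using assms by (rule order_tendstoD(2))
  moreover have "eventually (\<lambda>n. 2 \<le> f n) sequentially"
    unfolding f_def by real_asymp
  moreover have "eventually (\<lambda>n. f n < real n) sequentially"
    unfolding f_def by real_asymp
  moreover have "eventually (\<lambda>n. 2 < real n) sequentially"
    by real_asymp
  ultimately show ?thesis
  proof eventually_elim
    case (elim n)
    have "real (rho n) = real_of_int \<lfloor>f n\<rfloor>"
      using elim by (simp add: rho_def f_def)
    then have "f n - 1 < real (rho n)" "real (rho n) \<le> f n"
      by linarith+
    moreover have "log 2 (real n + 1) < d * (f n - 1)"
      using elim by (simp add: divide_less_eq)
    ultimately show ?case
      using elim assms by (smt (verit) mult_left_mono of_nat_0_less_iff of_nat_less_iff zero_less_log_cancel_iff)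
  qed
qed

lemma log_kk_le:
  assumes "rho n \<le> n"
  shows "log 2 (real (kk n)) \<le> real (rho n) * log 2 (real n)"
proof -
  have "0 < kk n" using assms by (simp add: kk_def)
  moreover have "kk n \<le> n ^ rho n"
    using assms by (simp add: kk_def binomial_le_pow)
  ultimately have "log 2 (real (kk n)) \<le> log 2 (real n ^ rho n)"
    by (intro log_mono) (auto simp flip: of_nat_power)
  then show ?thesis
    using assms \<open>0 < kk n\<close> by (cases "n = 0") (simp_all add: log_nat_power kk_def)
qed

lemma card_not_typical_var_le:
  fixes S :: "(nat set \<times> (nat \<Rightarrow> 'a)) set"
  assumes "finite A" "S \<subseteq> VV n A" "S \<noteq> {}" "0 < e" "0 \<le> \<epsilon>1"
    and "0 < rho n" "rho n < n" "0 < log 2 (real n)"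
    and "log 2 (real n + 1) < (e ^ 4 / (9 * ln 2) - 6 * \<epsilon>1) * real (rho n)"
    and "(1 - 6 * \<epsilon>1 / log 2 (real n)) * log 2 (real (kk n))
           \<le> (\<Sum>i=1..n. cond_entropy S (Xv i) (prefix i))"
  shows "real (card {i\<in>{1..n}. \<not> typical_var e n S i}) \<le> e * real n"
proof (cases "e < 1")
  case False
  have "card {i\<in>{1..n}. \<not> typical_var e n S i} \<le> card {1..n}"
    by (intro card_mono) auto
  then have "real (card {i\<in>{1..n}. \<not> typical_var e n S i}) \<le> real n"
    by simp
  also have "\<dots> \<le> e * real n"
    using False by (simp add: mult_le_cancel_right1)
  finally show ?thesis .
next
  case True
  define b where "b = real (card {i\<in>{1..n}. \<not> typical_var e n S i})"
  have fin: "finite S" using finite_subset[OF assms(2) finite_VV[OF assms(1)]] .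
  have "6 * \<epsilon>1 / log 2 (real n) * log 2 (real (kk n))
          \<le> 6 * \<epsilon>1 / log 2 (real n) * (real (rho n) * log 2 (real n))"
    using log_kk_le[of n] assms(5,7,8) by (intro mult_left_mono) auto
  then have entropy_lower: "log 2 (real (kk n)) - 6 * \<epsilon>1 * real (rho n) \<le> (\<Sum>i=1..n. cond_entropy S (Xv i) (prefix i))"
    using assms(8,10) by (simp add: algebra_simps)
  show ?thesis
    unfolding b_def[symmetric]
  proof (rule ccontr)
    assume "\<not> b \<le> e * real n"
    then have "e * real n * (real (rho n) / real n) * e ^ 3 / (9 * ln 2)
                 \<le> b * (real (rho n) / real n) * e ^ 3 / (9 * ln 2)"
      using assms by (intro divide_right_mono mult_right_mono) auto
    moreover have "e * real n * (real (rho n) / real n) * e ^ 3 / (9 * ln 2) = real (rho n) * (e ^ 4 / (9 * ln 2))"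
      using assms(7) by (simp add: field_simps numeral_eq_Suc)
    moreover have "(e ^ 4 / (9 * ln 2) - 6 * \<epsilon>1) * real (rho n)
                     = real (rho n) * (e ^ 4 / (9 * ln 2)) - 6 * \<epsilon>1 * real (rho n)"
      by (simp add: algebra_simps)
    ultimately show False
      using sum_cond_entropy_le[OF fin assms(3,2,6,7,4) True, folded b_def] assms(9) entropy_lower
      by linarith
  qed
qed

theorem mainTheorem5:
  fixes A :: "'a set" and \<epsilon>1 \<epsilon>5 :: real
  assumes "finite A"
    and "\<epsilon>1 > 0" and "\<epsilon>5 > 0"
    and "(log 2 (exp 1) / 8) * \<epsilon>5 ^ 4 > 14 * \<epsilon>1"
  shows "\<exists>N. \<forall>n \<ge> N. \<forall>S. S \<subseteq> VV n A \<longrightarrow> S \<noteq> {} \<longrightarrow>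
           (\<Sum>i = 1..n. cond_entropy S (Xv i) (prefix i))
              \<ge> (1 - 6 * \<epsilon>1 / log 2 (real n)) * log 2 (real (kk n)) \<longrightarrow>
           real (card {i \<in> {1..n}. \<not> typical_var \<epsilon>5 n S i}) \<le> \<epsilon>5 * real n"
proof -
  have "\<epsilon>5 ^ 4 / (9 * ln 2) > 112 / 9 * \<epsilon>1"
    using assms(4) by (simp add: log_def field_simps)
  then have "0 < \<epsilon>5 ^ 4 / (9 * ln 2) - 6 * \<epsilon>1"
    using assms(2) by linarith
  from eventually_rho_bounds[OF this] obtain N where
    N: "\<And>n. N \<le> n \<Longrightarrow> 0 < rho n \<and> rho n < n \<and> 0 < log 2 (real n) \<and>
           log 2 (real n + 1) < (\<epsilon>5 ^ 4 / (9 * ln 2) - 6 * \<epsilon>1) * real (rho n)"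
    unfolding eventually_sequentially by blast
  show ?thesis
  proof (intro exI allI impI)
    fix n and S :: "(nat set \<times> (nat \<Rightarrow> 'a)) set"
    assume "N \<le> n" "S \<subseteq> VV n A" "S \<noteq> {}"
      "(1 - 6 * \<epsilon>1 / log 2 (real n)) * log 2 (real (kk n)) \<le> (\<Sum>i = 1..n. cond_entropy S (Xv i) (prefix i))"
    with N[of n] show "real (card {i \<in> {1..n}. \<not> typical_var \<epsilon>5 n S i}) \<le> \<epsilon>5 * real n"
      using card_not_typical_var_le[OF assms(1) _ _ assms(3) less_imp_le[OF assms(2)]] by simp
  qed
qed

end
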